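(* Let $R \neq 0$ be a ring and let $n \geq 3$ be an integer. Then the full matrix ring ${\rm M}_n(R)$ is not a GSWNC ring.
   Context: All rings are associative with identity. An element $a$ of a ring $S$ is called strongly weakly nil-clean if there exist an idempotent $e \in S$ and a nilpotent $q \in S$ with $eq = qe$ such that $a = q + e$ or $a = q - e$. A ring $S$ is called GSWNC (generalized strongly weakly nil-clean) if every non-invertible element of $S$ is strongly weakly nil-clean. *)

theory Defs
  imports "Jordan_Normal_Form.Matrix"
begin

definition mat_idempotent :: "nat \<Rightarrow> 'a::ring_1 mat \<Rightarrow> bool" where
  "mat_idempotent n E \<longleftrightarrow> E \<in> carrier_mat n n \<and> E * E = E"

definition mat_nilpotent :: "nat \<Rightarrow> 'a::ring_1 mat \<Rightarrow> bool" where
  "mat_nilpotent n Q \<longleftrightarrow> Q \<in> carrier_mat n n \<and> (\<exists>k. Q ^\<^sub>m k = 0\<^sub>m n n)"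

definition mat_invertible :: "nat \<Rightarrow> 'a::ring_1 mat \<Rightarrow> bool" where
  "mat_invertible n A \<longleftrightarrow> A \<in> carrier_mat n n \<and>
     (\<exists>B \<in> carrier_mat n n. A * B = 1\<^sub>m n \<and> B * A = 1\<^sub>m n)"

definition mat_strongly_weakly_nil_clean :: "nat \<Rightarrow> 'a::ring_1 mat \<Rightarrow> bool" where
  "mat_strongly_weakly_nil_clean n A \<longleftrightarrow>
     (\<exists>E Q. mat_idempotent n E \<and> mat_nilpotent n Q \<and> E * Q = Q * E \<and>
            (A = Q + E \<or> A = Q - E))"

definition mat_GSWNC :: "'a::ring_1 itself \<Rightarrow> nat \<Rightarrow> bool" where
  "mat_GSWNC ty n \<longleftrightarrow>
     (\<forall>A :: 'a mat. A \<in> carrier_mat n n \<longrightarrow> \<not> mat_invertible n A \<longrightarrow>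
        mat_strongly_weakly_nil_clean n A)"

end

theory Submission
  imports Defs
begin

text \<open>If \<open>a = q + e\<close> or \<open>a = q - e\<close> with \<open>e\<close> idempotent, \<open>q\<close> nilpotent and \<open>eq = qe\<close>, then
  \<open>a\<^sup>2 - a = q(q + 2e - 1)\<close>, resp. \<open>a\<^sup>2 + a = q(q - 2e + 1)\<close>, is the product of \<open>q\<close> with an element
  commuting with it, hence nilpotent. In \<open>M\<^sub>n(R)\<close> take \<open>A\<close> with top-left block \<open>[[1,1],[1,0]]\<close> and
  zeros elsewhere; for \<open>n \<ge> 3\<close> its third row vanishes, so \<open>A\<close> is not invertible. But the blocks of
  \<open>A\<^sup>2 - A\<close> and \<open>A\<^sup>2 + A\<close> are \<open>[[1,0],[0,1]]\<close> and \<open>[[3,2],[2,1]]\<close>, both invertible in \<open>M\<^sub>2(R)\<close>,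
  so neither matrix is nilpotent.\<close>

lemma ring_ring_mat: "ring (ring_mat TYPE('a::ring_1) n b)"
  by unfold_locales (use add_inv_exists_mat in \<open>auto simp: ring_mat_def algebra_simps Units_def\<close>)

context ring
begin

lemma square_minus_self_nilpotent:
  assumes e: "e \<in> carrier R" and q: "q \<in> carrier R"
    and idem: "e \<otimes> e = e" and comm: "e \<otimes> q = q \<otimes> e" and nil: "q [^] (k::nat) = \<zero>"
  shows "((q \<oplus> e) \<otimes> (q \<oplus> e) \<ominus> (q \<oplus> e)) [^] k = \<zero>"
proof -
  define w where "w = q \<oplus> e \<oplus> e \<ominus> \<one>"
  have w: "w \<in> carrier R" using q e by (simp add: w_def)
  have "(q \<oplus> e) \<otimes> (q \<oplus> e) \<ominus> (q \<oplus> e) = q \<otimes> w"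
    unfolding w_def using q e idem comm
    by (simp add: l_distr r_distr r_minus minus_add a_ac minus_eq r_neg2)
  moreover have "q \<otimes> w = w \<otimes> q"
    unfolding w_def using q e comm
    by (simp add: l_distr r_distr r_minus l_minus minus_add a_ac minus_eq)
  ultimately show ?thesis using pow_mult_distrib[of q w k] q w nil by simp
qed

lemma square_plus_self_nilpotent:
  assumes e: "e \<in> carrier R" and q: "q \<in> carrier R"
    and idem: "e \<otimes> e = e" and comm: "e \<otimes> q = q \<otimes> e" and nil: "q [^] (k::nat) = \<zero>"
  shows "((q \<ominus> e) \<otimes> (q \<ominus> e) \<oplus> (q \<ominus> e)) [^] k = \<zero>"
proof -
  define w where "w = q \<ominus> e \<ominus> e \<oplus> \<one>"
  have w: "w \<in> carrier R" using q e by (simp add: w_def)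
  have cancel: "e \<oplus> (y \<oplus> (\<ominus> e \<oplus> z)) = y \<oplus> z"
    if "y \<in> carrier R" "z \<in> carrier R" for y z
    using e that by (metis a_lcomm r_neg2 a_inv_closed add.m_closed)
  have "(q \<ominus> e) \<otimes> (q \<ominus> e) \<oplus> (q \<ominus> e) = q \<otimes> w"
    unfolding w_def using q e idem comm
    by (simp add: cancel l_distr r_distr r_minus l_minus minus_add a_ac minus_eq)
  moreover have "q \<otimes> w = w \<otimes> q"
    unfolding w_def using q e comm
    by (simp add: l_distr r_distr r_minus l_minus minus_add a_ac minus_eq)
  ultimately show ?thesis using pow_mult_distrib[of q w k] q w nil by simp
qed

lemma pow_nonzero_if_left_factor_of_square:
  assumes x: "x \<in> carrier R" and b: "b \<in> carrier R" and bx: "b \<otimes> (x \<otimes> x) = x"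
    and "x \<noteq> \<zero>" and "\<one> \<noteq> \<zero>"
  shows "x [^] (k::nat) \<noteq> \<zero>"
proof -
  have "x [^] Suc k \<noteq> \<zero>" for k
  proof (induction k)
    case 0
    then show ?case using x \<open>x \<noteq> \<zero>\<close> by simp
  next
    case (Suc k)
    have "b \<otimes> x [^] Suc (Suc k) = x [^] Suc k"
      using x b bx by (metis m_assoc m_closed nat_pow_Suc2 nat_pow_closed)
    then show ?case using Suc.IH b by auto
  qed
  then show ?thesis using \<open>\<one> \<noteq> \<zero>\<close> by (cases k) (simp_all del: nat_pow_Suc)
qed

end

definition corner_mat :: "nat \<Rightarrow> 'a::zero \<Rightarrow> 'a \<Rightarrow> 'a \<Rightarrow> 'a \<Rightarrow> 'a mat" where
  "corner_mat n a b c d = mat n n (\<lambda>(i, j).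
     if i = 0 \<and> j = 0 then a else if i = 0 \<and> j = 1 then b
     else if i = 1 \<and> j = 0 then c else if i = 1 \<and> j = 1 then d else 0)"

lemma corner_mat_carrier [simp]: "corner_mat n a b c d \<in> carrier_mat n n"
  by (simp add: corner_mat_def)

lemma index_corner_mat:
  "i < n \<Longrightarrow> j < n \<Longrightarrow> corner_mat n a b c d $$ (i, j) =
     (if i = 0 \<and> j = 0 then a else if i = 0 \<and> j = 1 then b
      else if i = 1 \<and> j = 0 then c else if i = 1 \<and> j = 1 then d else 0)"
  by (simp add: corner_mat_def)

lemma corner_mat_add:
  fixes a b c d :: "'a::monoid_add"
  shows "corner_mat n a b c d + corner_mat n a' b' c' d' = corner_mat n (a + a') (b + b') (c + c') (d + d')"
  by (rule eq_matI) (auto simp: corner_mat_def)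

lemma corner_mat_diff:
  fixes a b c d :: "'a::group_add"
  shows "corner_mat n a b c d - corner_mat n a' b' c' d' = corner_mat n (a - a') (b - b') (c - c') (d - d')"
  by (rule eq_matI) (auto simp: corner_mat_def)

lemma corner_mat_mult:
  fixes a b c d :: "'a::semiring_0"
  assumes "2 \<le> n"
  shows "corner_mat n a b c d * corner_mat n a' b' c' d' =
    corner_mat n (a * a' + b * c') (a * b' + b * d') (c * a' + d * c') (c * b' + d * d')"
    (is "?L = ?C")
proof (rule eq_matI)
  fix i j assume "i < dim_row ?C" and "j < dim_col ?C"
  then have i: "i < n" and j: "j < n" by (auto simp: corner_mat_def)
  define f where "f k = corner_mat n a b c d $$ (i, k) * corner_mat n a' b' c' d' $$ (k, j)" for k
  have "?L $$ (i, j) = (\<Sum>k \<in> {0..<n}. f k)"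
    using i j by (simp add: scalar_prod_def f_def corner_mat_def)
  also have "\<dots> = (\<Sum>k \<in> {0..<2}. f k)"
    by (rule sum.mono_neutral_right) (use assms i j in \<open>auto simp: f_def index_corner_mat\<close>)
  also have "\<dots> = ?C $$ (i, j)"
    using assms i j by (auto simp: f_def index_corner_mat numeral_2_eq_2)
  finally show "?L $$ (i, j) = ?C $$ (i, j)" .
qed (auto simp: corner_mat_def)

lemma corner_mat_eq_zero_iff:
  assumes "2 \<le> n"
  shows "corner_mat n a b c d = 0\<^sub>m n n \<longleftrightarrow> a = 0 \<and> b = 0 \<and> c = 0 \<and> d = 0"
proof
  assume zero: "corner_mat n a b c d = 0\<^sub>m n n"
  have "corner_mat n a b c d $$ (i, j) = 0" if "i < n" "j < n" for i j
    using zero that by simp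
  from this[of 0 0] this[of 0 1] this[of 1 0] this[of 1 1]
  show "a = 0 \<and> b = 0 \<and> c = 0 \<and> d = 0"
    using assms by (simp add: index_corner_mat)
qed (auto simp: corner_mat_def)

lemma row_corner_mat_eq_zero:
  "2 \<le> i \<Longrightarrow> i < n \<Longrightarrow> row (corner_mat n a b c d) i = 0\<^sub>v n"
  by (rule eq_vecI) (auto simp: corner_mat_def)

lemma not_mat_invertible_if_zero_row:
  fixes A :: "'a::ring_1 mat"
  assumes "A \<in> carrier_mat n n" and "i < n" and "row A i = 0\<^sub>v n" and "(0::'a) \<noteq> 1"
  shows "\<not> mat_invertible n A"
proof
  assume "mat_invertible n A"
  then obtain B where B: "B \<in> carrier_mat n n" and AB: "A * B = 1\<^sub>m n"
    unfolding mat_invertible_def by blast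
  have "(A * B) $$ (i, i) = row A i \<bullet> col B i"
    using assms B by simp
  also have "\<dots> = 0"
    using assms B by simp
  finally show False
    using AB assms by simp
qed

lemma ring_mat_minus:
  fixes x y :: "'a::ring_1 mat"
  assumes "x \<in> carrier_mat n n" and "y \<in> carrier_mat n n"
  shows "x \<ominus>\<^bsub>ring_mat TYPE('a) n b\<^esub> y = x - y"
proof -
  interpret ring "ring_mat TYPE('a) n b" by (rule ring_ring_mat)
  have "\<ominus>\<^bsub>ring_mat TYPE('a) n b\<^esub> y = - y"
    by (rule minus_equality) (use assms in \<open>auto simp: ring_mat_simps\<close>)
  then show ?thesis
    using assms by (simp add: a_minus_def ring_mat_simps minus_add_uminus_mat)
qed

lemma mat_strongly_weakly_nil_clean_imp_nilpotent:
  fixes A :: "'a::ring_1 mat"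
  assumes "mat_strongly_weakly_nil_clean n A"
  shows "mat_nilpotent n (A * A - A) \<or> mat_nilpotent n (A * A + A)"
proof -
  obtain E Q k where E: "E \<in> carrier_mat n n" and idem: "E * E = E"
    and Q: "Q \<in> carrier_mat n n" and nil: "Q ^\<^sub>m k = 0\<^sub>m n n"
    and comm: "E * Q = Q * E" and decomp: "A = Q + E \<or> A = Q - E"
    using assms unfolding mat_strongly_weakly_nil_clean_def mat_idempotent_def mat_nilpotent_def
    by blast
  let ?R = "ring_mat TYPE('a) n ()"
  interpret R: ring ?R by (rule ring_ring_mat)
  have pow: "M ^\<^sub>m k = M [^]\<^bsub>?R\<^esub> k" if "M \<in> carrier_mat n n" for M
    using pow_mat_ring_pow[OF that] .
  have A: "A \<in> carrier_mat n n"
    using decomp E Q by auto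
  have nil_R: "Q [^]\<^bsub>?R\<^esub> k = \<zero>\<^bsub>?R\<^esub>"
    using nil pow[OF Q] by (simp add: ring_mat_simps)
  from decomp show ?thesis
  proof
    assume "A = Q + E"
    then have "(A \<otimes>\<^bsub>?R\<^esub> A \<ominus>\<^bsub>?R\<^esub> A) [^]\<^bsub>?R\<^esub> k = \<zero>\<^bsub>?R\<^esub>"
      using R.square_minus_self_nilpotent[of E Q k] E Q idem comm nil_R
      by (simp add: ring_mat_simps)
    then have "(A * A - A) ^\<^sub>m k = 0\<^sub>m n n"
      using A by (simp add: ring_mat_simps ring_mat_minus pow minus_carrier_mat)
    then show ?thesis
      using A by (auto simp: mat_nilpotent_def minus_carrier_mat)
  next
    assume "A = Q - E"
    then have "(A \<otimes>\<^bsub>?R\<^esub> A \<oplus>\<^bsub>?R\<^esub> A) [^]\<^bsub>?R\<^esub> k = \<zero>\<^bsub>?R\<^esub>"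
      using R.square_plus_self_nilpotent[of E Q k] E Q idem comm nil_R
      by (simp add: ring_mat_simps ring_mat_minus)
    then have "(A * A + A) ^\<^sub>m k = 0\<^sub>m n n"
      using A by (simp add: ring_mat_simps pow)
    then show ?thesis
      using A by (auto simp: mat_nilpotent_def)
  qed
qed

lemma not_mat_nilpotent_if_left_factor_of_square:
  fixes X B :: "'a::ring_1 mat"
  assumes "(0::'a) \<noteq> 1" and X: "X \<in> carrier_mat n n" and B: "B \<in> carrier_mat n n"
    and "B * (X * X) = X" and "X \<noteq> 0\<^sub>m n n"
  shows "\<not> mat_nilpotent n X"
proof
  assume "mat_nilpotent n X"
  then obtain k where "X ^\<^sub>m k = 0\<^sub>m n n"
    by (auto simp: mat_nilpotent_def)
  let ?R = "ring_mat TYPE('a) n ()"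
  interpret R: ring ?R by (rule ring_ring_mat)
  have "0 < n"
  proof (rule ccontr)
    assume "\<not> 0 < n"
    then have "X = 0\<^sub>m n n"
      using X by (intro eq_matI) auto
    then show False
      using \<open>X \<noteq> 0\<^sub>m n n\<close> by simp
  qed
  then have "\<one>\<^bsub>?R\<^esub> \<noteq> \<zero>\<^bsub>?R\<^esub>"
    using assms(1) by (auto simp: ring_mat_simps dest!: arg_cong[of _ _ "\<lambda>M. M $$ (0, 0)"])
  then have "X [^]\<^bsub>?R\<^esub> k \<noteq> \<zero>\<^bsub>?R\<^esub>"
    using R.pow_nonzero_if_left_factor_of_square[of X B k] assms by (simp add: ring_mat_simps)
  then show False
    using \<open>X ^\<^sub>m k = 0\<^sub>m n n\<close> pow_mat_ring_pow[OF X, of k "()"] by (simp add: ring_mat_simps)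
qed

theorem theorem2p25:
  assumes "(0::'a::ring_1) \<noteq> 1"
    and "n \<ge> 3"
  shows "\<not> mat_GSWNC TYPE('a) n"
proof
  assume GSWNC: "mat_GSWNC TYPE('a) n"
  define A where "A = corner_mat n (1::'a) 1 1 0"
  have "\<not> mat_invertible n A"
    using not_mat_invertible_if_zero_row[of A n 2] row_corner_mat_eq_zero[of 2 n "1::'a" 1 1 0] assms
    by (simp add: A_def)
  then have "mat_strongly_weakly_nil_clean n A"
    using GSWNC by (simp add: mat_GSWNC_def A_def)
  then have "mat_nilpotent n (A * A - A) \<or> mat_nilpotent n (A * A + A)"
    by (rule mat_strongly_weakly_nil_clean_imp_nilpotent)
  moreover have "A * A - A = corner_mat n 1 0 0 1" and "A * A + A = corner_mat n 3 2 2 1"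
    using assms by (simp_all add: A_def corner_mat_mult corner_mat_add corner_mat_diff)
  moreover have "\<not> mat_nilpotent n (corner_mat n (1::'a) 0 0 1)"
    by (rule not_mat_nilpotent_if_left_factor_of_square[where B = "corner_mat n 1 0 0 1"])
      (use assms in \<open>simp_all add: corner_mat_mult corner_mat_eq_zero_iff\<close>)
  moreover have "\<not> mat_nilpotent n (corner_mat n (3::'a) 2 2 1)"
    \<comment> \<open>\<open>[[-1,2],[2,-3]]\<close> is the inverse of \<open>[[3,2],[2,1]]\<close>\<close>
    by (rule not_mat_nilpotent_if_left_factor_of_square[where B = "corner_mat n (- 1) 2 2 (- 3)"])
      (use assms in \<open>simp_all add: corner_mat_mult corner_mat_eq_zero_iff\<close>)
  ultimately show False
    by auto
qed

end
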